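(* Let $F_1,\dots,F_n$ be groups and let $F=F_1\times\dots\times F_n$ act on a set $X$. Let $x\in X$, let $\mathrm{Stab}(x)$ be its stabilizer in $F$, let $S_i=F_i\cap\mathrm{Stab}(x)$, and let $N_i$ be the normalizer of $S_i$ in $F_i$. Then $\mathrm{Stab}(x)\subset N_1\times\dots\times N_n$. In particular, if no $S_i$ is normal in $F_i$, then $\#(F\cdot x)\geq 2^n$. *)

theory Defs
  imports "HOL-Algebra.Group_Action" "HOL-Algebra.Product_Groups"
begin

definition factor_embed :: "'i set \<Rightarrow> ('i \<Rightarrow> ('g, 'c) monoid_scheme) \<Rightarrow> 'i \<Rightarrow> 'g \<Rightarrow> ('i \<Rightarrow> 'g)"
  where "factor_embed I G i g = (\<lambda>j\<in>I. if j = i then g else \<one>\<^bsub>G j\<^esub>)"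

text \<open>S_i = F_i \<inter> Stab(x), viewed as a subset of F_i.\<close>
definition factor_stab ::
  "'i set \<Rightarrow> ('i \<Rightarrow> ('g, 'c) monoid_scheme) \<Rightarrow> (('i \<Rightarrow> 'g) \<Rightarrow> 'b \<Rightarrow> 'b) \<Rightarrow> 'b \<Rightarrow> 'i \<Rightarrow> 'g set"
  where "factor_stab I G \<phi> x i =
    {g \<in> carrier (G i). factor_embed I G i g \<in> stabilizer (product_group I G) \<phi> x}"

end

theory Submission
  imports Defs
begin

text \<open>If \<open>s\<close> fixes \<open>x\<close>, then conjugating the embedded copy of \<open>S\<^sub>i\<close> by \<open>s\<close> stays in
  \<open>Stab(x)\<close> and in the \<open>i\<close>-th factor, and equals the embedding of \<open>s\<^sub>i S\<^sub>i s\<^sub>i\<inverse>\<close>; so \<open>s\<^sub>i\<close>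
  normalizes \<open>S\<^sub>i\<close>. If no \<open>S\<^sub>i\<close> is normal, pick \<open>g\<^sub>i \<notin> N\<^sub>i\<close> and, for each set \<open>T\<close> of
  indices, let \<open>g\<^sub>T\<close> have coordinate \<open>g\<^sub>i\<close> for \<open>i \<in> T\<close> and \<open>1\<close> elsewhere. If
  \<open>g\<^sub>T x = g\<^sub>U x\<close>, then \<open>g\<^sub>U\<inverse> g\<^sub>T\<close> fixes \<open>x\<close>, yet its coordinate at any
  \<open>i \<in> T - U\<close> is \<open>g\<^sub>i \<notin> N\<^sub>i\<close>. Hence the \<open>2\<^sup>n\<close> points \<open>g\<^sub>T x\<close> are distinct.\<close>

lemma (in group_action) inv_mult_in_stabilizer:
  assumes "x \<in> E" "g \<in> carrier G" "h \<in> carrier G" "\<phi> g x = \<phi> h x"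
  shows "inv h \<otimes> g \<in> stabilizer G \<phi> x"
proof -
  interpret G: group G by (rule group_hom.axioms(1)[OF group_hom])
  have "\<phi> (inv h \<otimes> g) x = \<phi> (inv h) (\<phi> h x)"
    using assms by (simp add: composition_rule)
  also have "\<dots> = \<phi> (inv h \<otimes> h) x"
    using assms composition_rule G.inv_closed by metis
  also have "\<dots> = x"
    using assms stabilizer_one_closed by (simp add: stabilizer_def)
  finally show ?thesis using assms by (simp add: stabilizer_def)
qed

lemma (in group) normalizerI:
  assumes "S \<subseteq> carrier G" "g \<in> carrier G"
    and "\<And>h. h \<in> S \<Longrightarrow> g \<otimes> h \<otimes> inv g \<in> S"
    and "\<And>h. h \<in> S \<Longrightarrow> inv g \<otimes> h \<otimes> g \<in> S"
  shows "g \<in> normalizer G S"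
proof -
  have "g <# S #> inv g = S"
  proof
    show "g <# S #> inv g \<subseteq> S"
      using assms(3) by (auto simp: l_coset_def r_coset_def)
    show "S \<subseteq> g <# S #> inv g"
    proof
      fix h assume h: "h \<in> S"
      then have "h = g \<otimes> (inv g \<otimes> h \<otimes> g) \<otimes> inv g"
        using assms(1,2) by (simp add: m_assoc subsetD) (simp add: m_assoc[symmetric] subsetD)
      then show "h \<in> g <# S #> inv g"
        using assms(4)[OF h] unfolding l_coset_def r_coset_def by blast
    qed
  qed
  then show ?thesis
    using assms(1,2) by (simp add: normalizer_def stabilizer_def)
qed

lemma (in group) normalizer_conj_closed:
  assumes "S \<subseteq> carrier G" "g \<in> normalizer G S" "h \<in> S"
  shows "g \<otimes> h \<otimes> inv g \<in> S"
proof -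
  have "g <# S #> inv g = S"
    using assms by (simp add: normalizer_def stabilizer_def)
  moreover have "g \<otimes> h \<otimes> inv g \<in> g <# S #> inv g"
    using assms(3) unfolding l_coset_def r_coset_def by blast
  ultimately show ?thesis by simp
qed

lemma (in group) normal_if_normalizer_eq_carrier:
  assumes "subgroup S G" "carrier G \<subseteq> normalizer G S"
  shows "S \<lhd> G"
  using assms normalizer_conj_closed[OF subgroup.subset[OF assms(1)]]
  by (auto simp: normal_inv_iff)

lemma (in group_hom) subgroup_vimage:
  assumes "subgroup K H"
  shows "subgroup {g \<in> carrier G. h g \<in> K} G"
  using assms
  by (intro G.subgroupI) (auto simp: subgroup.one_closed subgroup.m_closed subgroup.m_inv_closed)

lemma factor_embed_hom:
  assumes groups: "\<And>j. j \<in> I \<Longrightarrow> group (G j)" and i: "i \<in> I"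
  shows "factor_embed I G i \<in> hom (G i) (product_group I G)"
proof (rule homI)
  fix a b assume "a \<in> carrier (G i)" "b \<in> carrier (G i)"
  then show "factor_embed I G i (a \<otimes>\<^bsub>G i\<^esub> b)
    = factor_embed I G i a \<otimes>\<^bsub>product_group I G\<^esub> factor_embed I G i b"
    using groups by (auto simp: factor_embed_def group.is_monoid)
qed (use groups i in \<open>auto simp: factor_embed_def group.is_monoid\<close>)

lemma factor_embed_conj:
  assumes groups: "\<And>j. j \<in> I \<Longrightarrow> group (G j)" and i: "i \<in> I"
    and s: "s \<in> carrier (product_group I G)" and h: "h \<in> carrier (G i)"
  shows "s \<otimes>\<^bsub>product_group I G\<^esub> factor_embed I G i h \<otimes>\<^bsub>product_group I G\<^esub> inv\<^bsub>product_group I G\<^esub> s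
    = factor_embed I G i (s i \<otimes>\<^bsub>G i\<^esub> h \<otimes>\<^bsub>G i\<^esub> inv\<^bsub>G i\<^esub> s i)"
  using s groups by (auto simp: factor_embed_def PiE_iff group.r_inv group.is_monoid)

definition select_factors ::
  "'i set \<Rightarrow> ('i \<Rightarrow> ('g, 'c) monoid_scheme) \<Rightarrow> ('i \<Rightarrow> 'g) \<Rightarrow> 'i set \<Rightarrow> 'i \<Rightarrow> 'g"
  where "select_factors I G g T = (\<lambda>j\<in>I. if j \<in> T then g j else \<one>\<^bsub>G j\<^esub>)"

lemma select_factors_carrier:
  assumes "\<And>j. j \<in> I \<Longrightarrow> group (G j)" "g \<in> (\<Pi> j\<in>I. carrier (G j))"
  shows "select_factors I G g T \<in> carrier (product_group I G)"
  using assms by (auto simp: select_factors_def group.is_monoid)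

lemma select_factors_inv_mult_component:
  assumes groups: "\<And>j. j \<in> I \<Longrightarrow> group (G j)" and g: "g \<in> (\<Pi> j\<in>I. carrier (G j))"
    and "i \<in> I" "i \<in> T" "i \<notin> U"
  shows "(inv\<^bsub>product_group I G\<^esub> select_factors I G g U
           \<otimes>\<^bsub>product_group I G\<^esub> select_factors I G g T) i = g i"
proof -
  have "g i \<in> carrier (G i)" using g assms(3) by blast
  then show ?thesis
    using assms select_factors_carrier[OF groups g, of U]
    by (auto simp: select_factors_def group.is_monoid monoid.inv_one)
qed

locale product_group_action =
  fixes I :: "'i set" and F :: "'i \<Rightarrow> ('g, 'c) monoid_scheme"
    and X :: "'b set" and \<phi> :: "('i \<Rightarrow> 'g) \<Rightarrow> 'b \<Rightarrow> 'b"
  assumes factor_group: "i \<in> I \<Longrightarrow> group (F i)"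
    and action: "group_action (product_group I F) X \<phi>"
begin

sublocale group_action "product_group I F" X \<phi>
  by (rule action)

lemma factor_stab_subgroup:
  assumes "x \<in> X" "i \<in> I"
  shows "subgroup (factor_stab I F \<phi> x i) (F i)"
proof -
  interpret group_hom "F i" "product_group I F" "factor_embed I F i"
    using factor_group assms(2) factor_embed_hom[OF factor_group assms(2)]
    by (auto simp: group_hom_def group_hom_axioms_def)
  show ?thesis
    unfolding factor_stab_def using stabilizer_subgroup[OF assms(1)] by (rule subgroup_vimage)
qed

lemma factor_stab_conj_closed:
  assumes "x \<in> X" "i \<in> I" "s \<in> stabilizer (product_group I F) \<phi> x"
    and "h \<in> factor_stab I F \<phi> x i"
  shows "s i \<otimes>\<^bsub>F i\<^esub> h \<otimes>\<^bsub>F i\<^esub> inv\<^bsub>F i\<^esub> s i \<in> factor_stab I F \<phi> x i"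
proof -
  interpret Stab: subgroup "stabilizer (product_group I F) \<phi> x" "product_group I F"
    using stabilizer_subgroup[OF assms(1)] .
  interpret Fi: group "F i" using factor_group assms(2) .
  have s: "s \<in> carrier (product_group I F)" using assms(3) Stab.subset by blast
  have h: "h \<in> carrier (F i)" "factor_embed I F i h \<in> stabilizer (product_group I F) \<phi> x"
    using assms(4) by (auto simp: factor_stab_def)
  have "factor_embed I F i (s i \<otimes>\<^bsub>F i\<^esub> h \<otimes>\<^bsub>F i\<^esub> inv\<^bsub>F i\<^esub> s i) \<in> stabilizer (product_group I F) \<phi> x"
    using factor_embed_conj[OF factor_group assms(2) s h(1)] assms(3) h(2)
    by (metis Stab.m_closed Stab.m_inv_closed)
  moreover have "s i \<in> carrier (F i)" using s assms(2) by auto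
  ultimately show ?thesis using h(1) by (simp add: factor_stab_def)
qed

lemma stabilizer_component_in_normalizer:
  assumes "x \<in> X" "i \<in> I" "s \<in> stabilizer (product_group I F) \<phi> x"
  shows "s i \<in> normalizer (F i) (factor_stab I F \<phi> x i)"
proof -
  interpret Stab: subgroup "stabilizer (product_group I F) \<phi> x" "product_group I F"
    using stabilizer_subgroup[OF assms(1)] .
  interpret Fi: group "F i" using factor_group assms(2) .
  have s: "s \<in> carrier (product_group I F)" using assms(3) Stab.subset by blast
  then have si: "s i \<in> carrier (F i)" using assms(2) by auto
  have "(inv\<^bsub>product_group I F\<^esub> s) i = inv\<^bsub>F i\<^esub> s i"
    using s assms(2) factor_group by simp
  then show ?thesis
    using factor_stab_conj_closed[OF assms(1,2) Stab.m_inv_closed[OF assms(3)]]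
      factor_stab_conj_closed[OF assms]
    by (intro Fi.normalizerI) (auto simp: factor_stab_def si)
qed

lemma stabilizer_subset_PiE_normalizer:
  assumes "x \<in> X"
  shows "stabilizer (product_group I F) \<phi> x
    \<subseteq> (\<Pi>\<^sub>E i\<in>I. normalizer (F i) (factor_stab I F \<phi> x i))"
  using stabilizer_component_in_normalizer[OF assms] stabilizer_subset by fastforce

lemma orbit_points_select_factors_neq:
  assumes "x \<in> X" "g \<in> (\<Pi> j\<in>I. carrier (F j) - normalizer (F j) (factor_stab I F \<phi> x j))"
    and "i \<in> I" "i \<in> T" "i \<notin> U"
  shows "\<phi> (select_factors I F g T) x \<noteq> \<phi> (select_factors I F g U) x"
proof
  have g: "g \<in> (\<Pi> j\<in>I. carrier (F j))" using assms(2) by auto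
  assume "\<phi> (select_factors I F g T) x = \<phi> (select_factors I F g U) x"
  then have "inv\<^bsub>product_group I F\<^esub> select_factors I F g U
      \<otimes>\<^bsub>product_group I F\<^esub> select_factors I F g T \<in> stabilizer (product_group I F) \<phi> x"
    using inv_mult_in_stabilizer assms(1) select_factors_carrier[OF factor_group g] by blast
  from stabilizer_component_in_normalizer[OF assms(1,3) this]
  show False
    using assms(2-) select_factors_inv_mult_component[OF factor_group g] by auto
qed

lemma inj_on_select_factors_orbit:
  assumes "x \<in> X" "g \<in> (\<Pi> i\<in>I. carrier (F i) - normalizer (F i) (factor_stab I F \<phi> x i))"
  shows "inj_on (\<lambda>T. \<phi> (select_factors I F g T) x) (Pow I)"
proof (rule inj_onI, rule ccontr)
  fix T U assume "T \<in> Pow I" "U \<in> Pow I" "T \<noteq> U"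
    and eq: "\<phi> (select_factors I F g T) x = \<phi> (select_factors I F g U) x"
  then obtain i where "i \<in> I" "i \<in> T \<and> i \<notin> U \<or> i \<in> U \<and> i \<notin> T"
    by blast
  then show False
    using orbit_points_select_factors_neq[OF assms] eq by metis
qed

lemma card_orbit_ge_two_pow:
  assumes "finite I" "x \<in> X" "\<And>i. i \<in> I \<Longrightarrow> \<not> factor_stab I F \<phi> x i \<lhd> F i"
  shows "infinite (orbit (product_group I F) \<phi> x) \<or> 2 ^ card I \<le> card (orbit (product_group I F) \<phi> x)"
proof -
  have "\<exists>g. g \<in> carrier (F i) - normalizer (F i) (factor_stab I F \<phi> x i)" if i: "i \<in> I" for i
  proof (rule ccontr)
    assume "\<nexists>g. g \<in> carrier (F i) - normalizer (F i) (factor_stab I F \<phi> x i)"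
    then have "factor_stab I F \<phi> x i \<lhd> F i"
      using group.normal_if_normalizer_eq_carrier[OF factor_group[OF i]
        factor_stab_subgroup[OF assms(2) i]] by blast
    with assms(3)[OF i] show False ..
  qed
  then obtain g where "\<forall>i\<in>I. g i \<in> carrier (F i) - normalizer (F i) (factor_stab I F \<phi> x i)"
    using bchoice by meson
  then have g: "g \<in> (\<Pi> i\<in>I. carrier (F i) - normalizer (F i) (factor_stab I F \<phi> x i))"
    by blast
  then have "g \<in> (\<Pi> i\<in>I. carrier (F i))" by blast
  from select_factors_carrier[OF factor_group this]
  have "(\<lambda>T. \<phi> (select_factors I F g T) x) ` Pow I \<subseteq> orbit (product_group I F) \<phi> x"
    unfolding orbit_def by (auto simp del: carrier_product_group)
  with inj_on_select_factors_orbit[OF assms(2) g] show ?thesis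
    using card_mono card_inj_on_le assms(1) by (metis card_Pow finite_Pow_iff)
qed

end

theorem mainTheorem17:
  fixes n :: nat
    and F :: "nat \<Rightarrow> ('g, 'c) monoid_scheme"
    and X :: "'b set"
    and \<phi> :: "(nat \<Rightarrow> 'g) \<Rightarrow> 'b \<Rightarrow> 'b"
    and x :: 'b
  assumes groups: "\<And>i. i < n \<Longrightarrow> group (F i)"
    and action: "group_action (product_group {..<n} F) X \<phi>"
    and x_in: "x \<in> X"
  shows "stabilizer (product_group {..<n} F) \<phi> x
           \<subseteq> (\<Pi>\<^sub>E i\<in>{..<n}. normalizer (F i) (factor_stab {..<n} F \<phi> x i))
         \<and> ((\<forall>i<n. \<not> (factor_stab {..<n} F \<phi> x i \<lhd> F i)) \<longrightarrow>
           infinite (orbit (product_group {..<n} F) \<phi> x)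
           \<or> 2 ^ n \<le> card (orbit (product_group {..<n} F) \<phi> x))"
proof -
  interpret product_group_action "{..<n}" F X \<phi>
    using groups action by (simp add: product_group_action_def)
  show ?thesis
    using stabilizer_subset_PiE_normalizer[OF x_in] card_orbit_ge_two_pow[OF _ x_in] by auto
qed

end
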